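(* Let $n\ge2$ and let $\mathcal{S}$ be a set of two-factor interactions among factors $F_1,\dots,F_n$. Suppose at least one of the following holds: (i) every factor appears in at most three interactions of $\mathcal{S}$, and there is no set of four factors for which $\mathcal{S}$ contains all six pairwise interactions; (ii) there are at most three factors each of which appears in more than two interactions of $\mathcal{S}$; (iii) either there is no sequence of distinct factors $G_1,\dots,G_m$ ($m\ge3$) with $G_1G_2,G_2G_3,\dots,G_{m-1}G_m,G_mG_1\in\mathcal{S}$, or there is at least one factor common to all such sequences. Then there exists a blocked $2^n$ factorial in blocks of size four from which all main effects and all interactions in $\mathcal{S}$ are estimable.
   Context: A blocked $2^n$ factorial in blocks of size four is specified by a $2\times n$ generator matrix $X$ over $\mathrm{GF}(2)$ of rank $2$: the principal block is the row space of $X$ and the other blocks are its cosets in $\mathrm{GF}(2)^n$. An effect of a set $S$ of factors, with contrast $(-1)^{\sum_{j\in S}x_j}$, is estimable iff its contrast sums to zero over every block. *)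

theory Defs
  imports Main "HOL-Library.Z2"
begin

text \<open>Vectors of GF(2)^n are modelled as functions nat => bit vanishing outside {0..<n};
  factors F_1..F_n are the indices 0..<n.\<close>

definition gfvec :: "nat \<Rightarrow> (nat \<Rightarrow> bit) set" where
  "gfvec n = {x. \<forall>i\<ge>n. x i = 0}"

text \<open>A 2 x n generator matrix, given by its two rows r1 r2, has rank 2 iff the rows are
  linearly independent over GF(2).\<close>
definition rank2 :: "nat \<Rightarrow> (nat \<Rightarrow> bit) \<Rightarrow> (nat \<Rightarrow> bit) \<Rightarrow> bool" where
  "rank2 n r1 r2 \<longleftrightarrow> r1 \<in> gfvec n \<and> r2 \<in> gfvec n \<and>
     (\<forall>a b :: bit. (\<lambda>i. a * r1 i + b * r2 i) = (\<lambda>_. 0) \<longrightarrow> a = 0 \<and> b = 0)"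

definition principal_block :: "(nat \<Rightarrow> bit) \<Rightarrow> (nat \<Rightarrow> bit) \<Rightarrow> (nat \<Rightarrow> bit) set" where
  "principal_block r1 r2 = {(\<lambda>i. a * r1 i + b * r2 i) | a b :: bit. True}"

definition block :: "(nat \<Rightarrow> bit) \<Rightarrow> (nat \<Rightarrow> bit) \<Rightarrow> (nat \<Rightarrow> bit) \<Rightarrow> (nat \<Rightarrow> bit) set" where
  "block r1 r2 x = (\<lambda>v. (\<lambda>i. x i + v i)) ` principal_block r1 r2"

definition contrast :: "nat set \<Rightarrow> (nat \<Rightarrow> bit) \<Rightarrow> int" where
  "contrast S x = (if (\<Sum>j\<in>S. x j) = 0 then 1 else -1)"

definition estimable :: "nat \<Rightarrow> (nat \<Rightarrow> bit) \<Rightarrow> (nat \<Rightarrow> bit) \<Rightarrow> nat set \<Rightarrow> bool" where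
  "estimable n r1 r2 S \<longleftrightarrow> (\<forall>x\<in>gfvec n. (\<Sum>y\<in>block r1 r2 x. contrast S y) = 0)"

definition ideg :: "nat set set \<Rightarrow> nat \<Rightarrow> nat" where
  "ideg I f = card {e\<in>I. f \<in> e}"

definition icycle :: "nat \<Rightarrow> nat set set \<Rightarrow> nat list \<Rightarrow> bool" where
  "icycle n I G \<longleftrightarrow> distinct G \<and> length G \<ge> 3 \<and> set G \<subseteq> {0..<n} \<and>
     (\<forall>i<length G. {G ! i, G ! ((i + 1) mod length G)} \<in> I)"

end

theory Submission
  imports Defs
begin

text \<open>Column j of the generator matrix is a vector of GF(2)^2, and an effect is estimable as
  soon as the columns of its factors have nonzero sum: the contrast then restricts to every block
  as a nontrivial character of GF(2)^2. So it suffices to give the factors nonzero columns,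
  different for interacting factors; the three nonzero vectors serve as the three colours of a
  proper colouring of the interaction graph, and two colours in use already give rank 2.

  Each hypothesis yields a 3-colouring through a minimal non-3-colourable set W, in which every
  factor has at least three neighbours. Under (ii) W has at most three elements, too few. Under
  (iii) W without the common factor still has minimum degree two, hence a cycle avoiding it. Under
  (i) W is cubic without K4, and Brooks' argument applies: take nonadjacent neighbours u, w of
  some v; if W - {u, w} is connected, colour u and w alike and the rest greedily towards v,
  otherwise glue colourings of the two sides that agree on u and w.\<close>

section \<open>Estimability from the columns of the generator matrix\<close>

lemma bit_add_eq_0_iff: "(a::bit) + b = 0 \<longleftrightarrow> a = b"
  by (cases a; cases b) simp_all

lemma inj_block_parametrisation:
  assumes "rank2 n r1 r2"
  shows "inj (\<lambda>p::bit \<times> bit. \<lambda>i. x i + (fst p * r1 i + snd p * r2 i))"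
proof (rule injI)
  fix p q :: "bit \<times> bit"
  assume "(\<lambda>i. x i + (fst p * r1 i + snd p * r2 i)) = (\<lambda>i. x i + (fst q * r1 i + snd q * r2 i))"
  then have pq: "fst p * r1 i + snd p * r2 i = fst q * r1 i + snd q * r2 i" for i
    by (simp only: fun_eq_iff add_left_cancel)
  have "(\<lambda>i. (fst p + fst q) * r1 i + (snd p + snd q) * r2 i) = (\<lambda>_. 0)"
  proof
    fix i
    have "(fst p + fst q) * r1 i + (snd p + snd q) * r2 i
        = (fst p * r1 i + snd p * r2 i) + (fst q * r1 i + snd q * r2 i)"
      by (simp only: distrib_right add.assoc add.left_commute)
    then show "(fst p + fst q) * r1 i + (snd p + snd q) * r2 i = 0"
      using pq[of i] by (simp only: bit_add_eq_0_iff)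
  qed
  with assms have "fst p + fst q = 0 \<and> snd p + snd q = 0"
    unfolding rank2_def by blast
  then show "p = q"
    by (simp only: bit_add_eq_0_iff prod_eq_iff)
qed

lemma sum_block:
  assumes "rank2 n r1 r2"
  shows "(\<Sum>y\<in>block r1 r2 x. f y)
       = (\<Sum>p\<in>UNIV. f (\<lambda>i. x i + (fst p * r1 i + snd p * r2 i)))"
proof -
  have "principal_block r1 r2 = (\<lambda>p. \<lambda>i. fst p * r1 i + snd p * r2 i) ` UNIV"
    unfolding principal_block_def by (auto simp: image_def)
  then have "block r1 r2 x = (\<lambda>p. \<lambda>i. x i + (fst p * r1 i + snd p * r2 i)) ` UNIV"
    by (simp only: block_def image_image)
  then show ?thesis
    using sum.reindex[OF inj_block_parametrisation[OF assms], of f] by (simp only: comp_def)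
qed

lemma UNIV_bit_pair: "(UNIV :: (bit \<times> bit) set) = {(0, 0), (0, 1), (1, 0), (1, 1)}"
  by (auto intro: bit.exhaust)

lemma estimable_if_row_sum_nonzero:
  assumes rk: "rank2 n r1 r2"
    and ne: "(\<Sum>j\<in>S. r1 j) \<noteq> 0 \<or> (\<Sum>j\<in>S. r2 j) \<noteq> 0"
  shows "estimable n r1 r2 S"
  unfolding estimable_def
proof
  fix x :: "nat \<Rightarrow> bit"
  define s0 s1 s2 where "s0 = (\<Sum>j\<in>S. x j)" and "s1 = (\<Sum>j\<in>S. r1 j)" and "s2 = (\<Sum>j\<in>S. r2 j)"
  have "(\<Sum>j\<in>S. x j + (fst p * r1 j + snd p * r2 j)) = s0 + (fst p * s1 + snd p * s2)" for p
    unfolding s0_def s1_def s2_def by (simp only: sum.distrib sum_distrib_left)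
  then have "(\<Sum>y\<in>block r1 r2 x. contrast S y)
      = (\<Sum>p\<in>UNIV. if s0 + (fst p * s1 + snd p * s2) = 0 then 1 else -1)"
    by (simp only: sum_block[OF rk] contrast_def)
  \<comment> \<open>a nontrivial character of GF(2)^2 sums to zero\<close>
  also have "\<dots> = 0"
    using ne unfolding UNIV_bit_pair s1_def[symmetric] s2_def[symmetric]
    by (cases s0; cases s1; cases s2) simp_all
  finally show "(\<Sum>y\<in>block r1 r2 x. contrast S y) = 0" .
qed

text \<open>The generator matrix whose j-th column is v j (for j < n) has rows
  design_row n v fst and design_row n v snd.\<close>

definition design_row :: "nat \<Rightarrow> (nat \<Rightarrow> bit \<times> bit) \<Rightarrow> (bit \<times> bit \<Rightarrow> bit) \<Rightarrow> nat \<Rightarrow> bit" where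
  "design_row n v coord i = (if i < n then coord (v i) else 0)"

lemma rank2_design_rows:
  assumes "i < n" "j < n" "v i \<noteq> v j" "v i \<noteq> (0, 0)" "v j \<noteq> (0, 0)"
  shows "rank2 n (design_row n v fst) (design_row n v snd)"
  unfolding rank2_def
proof (intro conjI allI impI)
  show "design_row n v fst \<in> gfvec n" "design_row n v snd \<in> gfvec n"
    by (simp_all add: gfvec_def design_row_def)
  fix a b :: bit
  assume zero: "(\<lambda>k. a * design_row n v fst k + b * design_row n v snd k) = (\<lambda>_. 0)"
  have "a * fst (v i) + b * snd (v i) = 0" "a * fst (v j) + b * snd (v j) = 0"
    using fun_cong[OF zero, of i] fun_cong[OF zero, of j] assms(1,2)
    by (simp_all only: design_row_def if_True)
  moreover obtain p q p' q' where "v i = (p, q)" "v j = (p', q')" by fastforce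
  ultimately show "a = 0" "b = 0"
    using assms(3-5) by (cases a; cases b; cases p; cases q; cases p'; cases q'; simp)+
qed

lemma estimable_main_effect:
  assumes "rank2 n (design_row n v fst) (design_row n v snd)" "j < n" "v j \<noteq> (0, 0)"
  shows "estimable n (design_row n v fst) (design_row n v snd) {j}"
  by (rule estimable_if_row_sum_nonzero[OF assms(1)])
    (use assms(2,3) in \<open>auto simp: design_row_def prod_eq_iff\<close>)

lemma estimable_interaction:
  assumes "rank2 n (design_row n v fst) (design_row n v snd)"
    and "j < n" "k < n" "j \<noteq> k" "v j \<noteq> v k"
  shows "estimable n (design_row n v fst) (design_row n v snd) {j, k}"
  by (rule estimable_if_row_sum_nonzero[OF assms(1)])
    (use assms(2-5) in \<open>auto simp: design_row_def prod_eq_iff bit_add_eq_0_iff\<close>)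

definition colour_vector :: "nat \<Rightarrow> bit \<times> bit" where
  "colour_vector c = (if c = 0 then (1, 0) else if c = 1 then (0, 1) else (1, 1))"

lemma colour_vector_nonzero: "colour_vector c \<noteq> (0, 0)"
  by (simp add: colour_vector_def)

lemma colour_vector_eq_iff: "c < 3 \<Longrightarrow> d < 3 \<Longrightarrow> colour_vector c = colour_vector d \<longleftrightarrow> c = d"
  by (auto simp: colour_vector_def)

section \<open>Proper 3-colourings of the interaction graph\<close>

definition neighbours :: "nat set set \<Rightarrow> nat set \<Rightarrow> nat \<Rightarrow> nat set" where
  "neighbours I T x = {y \<in> T. y \<noteq> x \<and> {x, y} \<in> I}"

definition proper_colouring :: "nat set set \<Rightarrow> nat set \<Rightarrow> (nat \<Rightarrow> nat) \<Rightarrow> bool" where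
  "proper_colouring I T col \<longleftrightarrow> (\<forall>x\<in>T. col x < 3) \<and>
     (\<forall>x\<in>T. \<forall>y\<in>T. x \<noteq> y \<longrightarrow> {x, y} \<in> I \<longrightarrow> col x \<noteq> col y)"

definition three_colourable :: "nat set set \<Rightarrow> nat set \<Rightarrow> bool" where
  "three_colourable I T \<longleftrightarrow> (\<exists>col. proper_colouring I T col)"

lemma proper_colouring_subset:
  "proper_colouring I T col \<Longrightarrow> T' \<subseteq> T \<Longrightarrow> proper_colouring I T' col"
  unfolding proper_colouring_def by blast

lemma three_colourable_subset: "three_colourable I T \<Longrightarrow> T' \<subseteq> T \<Longrightarrow> three_colourable I T'"
  unfolding three_colourable_def using proper_colouring_subset by blast

lemma proper_colouring_empty: "proper_colouring I {} col"
  unfolding proper_colouring_def by simp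

lemma neighbours_subset: "neighbours I T x \<subseteq> T"
  unfolding neighbours_def by blast

lemma proper_colouring_insert:
  assumes "proper_colouring I T col" "c < 3" "c \<notin> col ` neighbours I T x"
  shows "proper_colouring I (insert x T) (col(x := c))"
  unfolding proper_colouring_def
proof (intro conjI ballI impI)
  fix y assume "y \<in> insert x T"
  then show "(col(x := c)) y < 3"
    using assms(1,2) unfolding proper_colouring_def by auto
next
  fix y z assume yz: "y \<in> insert x T" "z \<in> insert x T" "y \<noteq> z" "{y, z} \<in> I"
  then consider "y = x" "z \<in> neighbours I T x" | "z = x" "y \<in> neighbours I T x"
    | "y \<in> T" "z \<in> T" "y \<noteq> x" "z \<noteq> x"
    unfolding neighbours_def by (cases "y = x"; cases "z = x") (auto simp: insert_commute)
  then show "(col(x := c)) y \<noteq> (col(x := c)) z"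
    using assms(1,3) yz(3,4) unfolding proper_colouring_def by cases force+
qed

lemma free_colour:
  assumes "finite A" "card A \<le> 2"
  obtains c :: nat where "c < 3" "c \<notin> A"
proof -
  have "\<not> {0, 1, 2} \<subseteq> A"
  proof
    assume "{0, 1, 2} \<subseteq> A"
    then have "card {0::nat, 1, 2} \<le> card A" by (rule card_mono[OF assms(1)])
    with assms(2) show False by simp
  qed
  then obtain c where "c \<in> {0, 1, 2}" "c \<notin> A" by blast
  then show ?thesis using that[of c] by auto
qed

lemma proper_colouring_extend:
  assumes "proper_colouring I T col" "finite A" "card A \<le> 2" "col ` neighbours I T x \<subseteq> A"
  obtains c where "c \<notin> A" "proper_colouring I (insert x T) (col(x := c))"
proof -
  obtain c where "c < 3" "c \<notin> A" using free_colour[OF assms(2,3)] .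
  then show ?thesis
    using that proper_colouring_insert[OF assms(1)] assms(4) by blast
qed

lemma proper_colouring_insert_low_degree:
  assumes col: "proper_colouring I T col" and fin: "finite (col ` neighbours I T x)"
    and deg: "card (col ` neighbours I T x) \<le> 2"
  obtains c where "proper_colouring I (insert x T) (col(x := c))"
proof -
  obtain c where "c \<notin> col ` neighbours I T x" and col': "proper_colouring I (insert x T) (col(x := c))"
    by (rule proper_colouring_extend[OF col fin deg order.refl])
  from col' show ?thesis by (rule that)
qed

lemma proper_colouring_two_colours:
  assumes "2 \<le> n" "proper_colouring I {0..<n} col"
  obtains col' i j where "proper_colouring I {0..<n} col'" "i < n" "j < n" "col' i \<noteq> col' j"
proof (cases "\<exists>i<n. \<exists>j<n. col i \<noteq> col j")
  case True
  then obtain i j where "i < n" "j < n" "col i \<noteq> col j" by blast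
  with assms(2) show ?thesis by (rule that)
next
  case False
  have no_edge: "{x, y} \<notin> I" if "x < n" "y < n" "x \<noteq> y" for x y
  proof
    assume "{x, y} \<in> I"
    with assms(2) that have "col x \<noteq> col y" unfolding proper_colouring_def by simp
    with False that show False by blast
  qed
  then have "proper_colouring I {0..<n} (\<lambda>i. if i = 0 then 0 else 1)"
    unfolding proper_colouring_def by auto
  moreover have "(0::nat) < n" "(1::nat) < n" using assms(1) by simp_all
  ultimately show ?thesis by (rule that) simp
qed

lemma design_of_colouring:
  assumes "2 \<le> n" and edges: "\<forall>e\<in>I. \<exists>j k. j < n \<and> k < n \<and> j \<noteq> k \<and> e = {j, k}"
    and "three_colourable I {0..<n}"
  shows "\<exists>r1 r2. rank2 n r1 r2 \<and> (\<forall>j<n. estimable n r1 r2 {j}) \<and> (\<forall>e\<in>I. estimable n r1 r2 e)"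
proof -
  obtain col i j where col: "proper_colouring I {0..<n} col" and ij: "i < n" "j < n" "col i \<noteq> col j"
    using assms(1,3) proper_colouring_two_colours unfolding three_colourable_def by metis
  have col3: "k < n \<Longrightarrow> col k < 3" for k
    using col unfolding proper_colouring_def by simp
  define v where "v = colour_vector \<circ> col"
  have rk: "rank2 n (design_row n v fst) (design_row n v snd)"
    using ij col3 colour_vector_eq_iff colour_vector_nonzero
    by (intro rank2_design_rows[of i n j]) (auto simp: v_def)
  moreover have "\<forall>j<n. estimable n (design_row n v fst) (design_row n v snd) {j}"
    using estimable_main_effect[OF rk] colour_vector_nonzero by (simp add: v_def)
  moreover have "\<forall>e\<in>I. estimable n (design_row n v fst) (design_row n v snd) e"
  proof
    fix e assume "e \<in> I"
    with edges obtain j k where jk: "j < n" "k < n" "j \<noteq> k" and e: "e = {j, k}" by blast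
    then have "col j \<noteq> col k"
      using col \<open>e \<in> I\<close> unfolding proper_colouring_def by simp
    then have "v j \<noteq> v k"
      using col3 jk colour_vector_eq_iff by (simp add: v_def)
    then show "estimable n (design_row n v fst) (design_row n v snd) e"
      using estimable_interaction[OF rk jk] e by simp
  qed
  ultimately show ?thesis by blast
qed

section \<open>Minimal non-3-colourable sets\<close>

definition critical :: "nat set set \<Rightarrow> nat set \<Rightarrow> bool" where
  "critical I W \<longleftrightarrow> \<not> three_colourable I W \<and> (\<forall>W'. W' \<subset> W \<longrightarrow> three_colourable I W')"

lemma critical_subset_exists:
  assumes "finite V" "\<not> three_colourable I V"
  shows "\<exists>W\<subseteq>V. critical I W"
  using assms
proof (induction V rule: finite_psubset_induct)
  case (psubset V)
  show ?case
  proof (cases "critical I V")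
    case False
    with psubset.prems obtain W where W: "W \<subset> V" "\<not> three_colourable I W"
      unfolding critical_def by blast
    from psubset.IH[OF W] obtain W' where "W' \<subseteq> W" "critical I W'" by blast
    with W(1) show ?thesis by (meson psubset_imp_subset subset_trans)
  qed blast
qed

lemma critical_nonempty: "critical I W \<Longrightarrow> W \<noteq> {}"
  unfolding critical_def three_colourable_def using proper_colouring_empty by blast

lemma critical_degree:
  assumes "finite W" "critical I W" "x \<in> W"
  shows "3 \<le> card (neighbours I W x)"
proof (rule ccontr)
  assume low: "\<not> 3 \<le> card (neighbours I W x)"
  have "W - {x} \<subset> W" using assms(3) by blast
  then obtain col where col: "proper_colouring I (W - {x}) col"
    using assms(2) unfolding critical_def three_colourable_def by blast
  have nb: "neighbours I (W - {x}) x = neighbours I W x"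
    unfolding neighbours_def by blast
  have fin: "finite (neighbours I W x)"
    using finite_subset[OF neighbours_subset assms(1)] .
  then have "card (col ` neighbours I (W - {x}) x) \<le> 2"
    using card_image_le[OF fin, of col] low nb by simp
  then obtain c where "proper_colouring I (insert x (W - {x})) (col(x := c))"
    using proper_colouring_insert_low_degree[OF col] fin nb by (metis finite_imageI)
  then have "three_colourable I W"
    using assms(3) insert_Diff unfolding three_colourable_def by metis
  with assms(2) show False unfolding critical_def by blast
qed

lemma critical_card:
  assumes "finite W" "critical I W"
  shows "4 \<le> card W"
proof -
  obtain x where x: "x \<in> W" using critical_nonempty[OF assms(2)] by blast
  have "neighbours I W x \<subseteq> W - {x}" unfolding neighbours_def by blast
  then have "card (neighbours I W x) \<le> card W - 1"
    using card_mono[of "W - {x}"] assms(1) x by (simp add: card_Diff_singleton)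
  with critical_degree[OF assms x] show ?thesis by linarith
qed

lemma card_neighbours_le_ideg:
  assumes "finite I"
  shows "card (neighbours I T x) \<le> ideg I x"
  unfolding ideg_def
proof (rule card_inj_on_le[of "\<lambda>y. {x, y}"])
  show "inj_on (\<lambda>y. {x, y}) (neighbours I T x)"
    by (auto simp: inj_on_def doubleton_eq_iff)
  show "(\<lambda>y. {x, y}) ` neighbours I T x \<subseteq> {e \<in> I. x \<in> e}"
    by (auto simp: neighbours_def)
  show "finite {e \<in> I. x \<in> e}" using assms by simp
qed

lemma three_colourable_few_high_degree:
  assumes "finite I" "card {f. f < n \<and> 2 < ideg I f} \<le> 3"
  shows "three_colourable I {0..<n}"
proof (rule ccontr)
  assume "\<not> three_colourable I {0..<n}"
  then obtain W where W: "W \<subseteq> {0..<n}" "critical I W"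
    using critical_subset_exists by blast
  then have fin: "finite W" using finite_subset by blast
  have "W \<subseteq> {f. f < n \<and> 2 < ideg I f}"
  proof
    fix x assume x: "x \<in> W"
    have "3 \<le> ideg I x"
      using critical_degree[OF fin W(2) x] card_neighbours_le_ideg[OF assms(1), of W x] by linarith
    with x W(1) show "x \<in> {f. f < n \<and> 2 < ideg I f}" by auto
  qed
  then have "card W \<le> 3"
    using card_mono[of "{f. f < n \<and> 2 < ideg I f}" W] assms(2) by simp
  with critical_card[OF fin W(2)] show False by simp
qed

section \<open>Cycles\<close>

definition path_in :: "nat set set \<Rightarrow> nat set \<Rightarrow> nat list \<Rightarrow> bool" where
  "path_in I T p \<longleftrightarrow> p \<noteq> [] \<and> distinct p \<and> set p \<subseteq> T \<and>
     (\<forall>i. Suc i < length p \<longrightarrow> {p ! i, p ! Suc i} \<in> I)"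

lemma path_in_Cons:
  assumes p: "path_in I T p" and y: "y \<in> neighbours I T (hd p)" "y \<notin> set p"
  shows "path_in I T (y # p)"
  unfolding path_in_def
proof (intro conjI allI impI)
  show "y # p \<noteq> []" "distinct (y # p)" "set (y # p) \<subseteq> T"
    using p y unfolding path_in_def neighbours_def by auto
  fix i assume i: "Suc i < length (y # p)"
  show "{(y # p) ! i, (y # p) ! Suc i} \<in> I"
  proof (cases i)
    case 0
    with p y(1) show ?thesis
      unfolding path_in_def neighbours_def by (simp add: hd_conv_nth insert_commute)
  next
    case (Suc j)
    with p i show ?thesis unfolding path_in_def by simp
  qed
qed

lemma length_path_in:
  assumes "finite T" "path_in I T p"
  shows "length p \<le> card T"
  using assms distinct_card[of p] card_mono[of T "set p"] unfolding path_in_def by simp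

lemma icycle_take_path_in:
  assumes p: "path_in I T p" and T: "T \<subseteq> {0..<n}"
    and m: "2 \<le> m" "m < length p" and closing: "{p ! m, hd p} \<in> I"
  shows "icycle n I (take (Suc m) p)"
  unfolding icycle_def
proof (intro conjI allI impI)
  let ?G = "take (Suc m) p"
  have len: "length ?G = Suc m" using m by simp
  show "distinct ?G" "set ?G \<subseteq> {0..<n}"
    using p T set_take_subset[of "Suc m" p] unfolding path_in_def by auto
  show "3 \<le> length ?G" using len m by simp
  fix i assume i: "i < length ?G"
  show "{?G ! i, ?G ! ((i + 1) mod length ?G)} \<in> I"
  proof (cases "i < m")
    case True
    with p m len show ?thesis unfolding path_in_def by simp
  next
    case False
    with i len have "i = m" by simp
    moreover from this len have "(i + 1) mod length ?G = 0" by simp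
    ultimately show ?thesis using p closing m unfolding path_in_def by (simp add: hd_conv_nth)
  qed
qed

lemma cycle_if_min_degree_two:
  assumes fin: "finite T" and T: "T \<subseteq> {0..<n}" "T \<noteq> {}"
    and deg: "\<forall>x\<in>T. 2 \<le> card (neighbours I T x)"
  shows "\<exists>G. icycle n I G \<and> set G \<subseteq> T"
proof -
  obtain x where "x \<in> T" using T(2) by blast
  then have "path_in I T [x]" unfolding path_in_def by simp
  then obtain p where p: "path_in I T p" and longest: "\<And>q. path_in I T q \<Longrightarrow> length q \<le> length p"
    using ex_has_greatest_nat[of "path_in I T" "[x]" length "Suc (card T)"]
      length_path_in[OF fin] by (metis less_Suc_eq_le)
  have "neighbours I T (hd p) \<subseteq> set p"
    using path_in_Cons[OF p] longest by fastforce
  moreover have "hd p \<in> T" using p unfolding path_in_def by (simp add: subset_iff)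
  with deg have "\<not> neighbours I T (hd p) \<subseteq> {p ! 1}"
    using card_mono[of "{p ! 1}" "neighbours I T (hd p)"] by fastforce
  ultimately obtain y where y: "y \<in> neighbours I T (hd p)" "y \<in> set p" "y \<noteq> p ! 1" by blast
  then obtain m where m: "m < length p" "p ! m = y" by (metis in_set_conv_nth)
  have "p ! m \<noteq> p ! 0" using m y(1) p unfolding neighbours_def path_in_def by (simp add: hd_conv_nth)
  then have "m \<noteq> 0" by (cases m) auto
  moreover have "m \<noteq> 1" using m(2) y(3) by auto
  ultimately have "2 \<le> m" by linarith
  moreover have "{p ! m, hd p} \<in> I"
    using y(1) m(2) unfolding neighbours_def by (simp add: insert_commute)
  ultimately have "icycle n I (take (Suc m) p)"
    using icycle_take_path_in[OF p T(1)] m(1) by blast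
  moreover have "set (take (Suc m) p) \<subseteq> T"
    using p set_take_subset unfolding path_in_def by fast
  ultimately show ?thesis by blast
qed

lemma critical_cycle_avoiding:
  assumes W: "W \<subseteq> {0..<n}" "critical I W"
  shows "\<exists>G. icycle n I G \<and> f \<notin> set G"
proof -
  have fin: "finite W" using W(1) finite_subset by blast
  have "W - {f} \<noteq> {}"
  proof
    assume "W - {f} = {}"
    then have "card W \<le> card {f}" by (intro card_mono) auto
    with critical_card[OF fin W(2)] show False by simp
  qed
  moreover have "2 \<le> card (neighbours I (W - {f}) x)" if x: "x \<in> W - {f}" for x
  proof -
    have "neighbours I (W - {f}) x = neighbours I W x - {f}" unfolding neighbours_def by blast
    then have "card (neighbours I W x) - 1 \<le> card (neighbours I (W - {f}) x)"
      using diff_card_le_card_Diff[of "{f}" "neighbours I W x"] by simp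
    with critical_degree[OF fin W(2), of x] x show ?thesis by simp
  qed
  ultimately obtain G where "icycle n I G" "set G \<subseteq> W - {f}"
    using cycle_if_min_degree_two[of "W - {f}" n I] fin W(1) by blast
  then show ?thesis by blast
qed

lemma three_colourable_if_cycles_share_vertex:
  assumes "(\<nexists>G. icycle n I G) \<or> (\<exists>f<n. \<forall>G. icycle n I G \<longrightarrow> f \<in> set G)"
  shows "three_colourable I {0..<n}"
proof (rule ccontr)
  assume "\<not> three_colourable I {0..<n}"
  then obtain W where W: "W \<subseteq> {0..<n}" "critical I W"
    using critical_subset_exists by blast
  obtain f where "\<forall>G. icycle n I G \<longrightarrow> f \<in> set G" using assms by blast
  with critical_cycle_avoiding[OF W, of f] show False by blast
qed

section \<open>Brooks' theorem for maximum degree three\<close>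

lemma proper_colouring_normalise:
  assumes "proper_colouring I T col" "u \<in> T" "w \<in> T"
  obtains col' where "proper_colouring I T col'" "col' u = 0"
    "col' w = (if col u = col w then 0 else 1)"
proof -
  have cu: "col u < 3" and cw: "col w < 3" using assms unfolding proper_colouring_def by auto
  define q where "q = (if col u \<noteq> col w then col w else if col u = 0 then 1 else 0)"
  define \<pi> where "\<pi> c = (if c = col u then 0 else if c = q then 1 else (2::nat))" for c
  have q: "q \<noteq> col u" "q < 3" unfolding q_def using cw by auto
  have "\<pi> c \<noteq> \<pi> c'" if "c < 3" "c' < 3" "c \<noteq> c'" for c c'
    using that q cu unfolding \<pi>_def by auto
  then have "proper_colouring I T (\<pi> \<circ> col)"
    using assms(1) unfolding proper_colouring_def by (auto simp: \<pi>_def)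
  moreover have "(\<pi> \<circ> col) w = (if col u = col w then 0 else 1)"
    by (auto simp: \<pi>_def q_def)
  ultimately show ?thesis using that by (simp add: \<pi>_def)
qed

lemma proper_colouring_glue:
  assumes "proper_colouring I (A \<union> C) ca" "proper_colouring I (B \<union> C) cb"
    and "\<forall>x\<in>C. ca x = cb x" "A \<inter> B = {}" "\<forall>x\<in>A. \<forall>y\<in>B. {x, y} \<notin> I"
  shows "proper_colouring I (A \<union> B \<union> C) (\<lambda>x. if x \<in> B then cb x else ca x)"
  using assms unfolding proper_colouring_def
  by (simp add: ball_Un) (metis disjoint_iff insert_commute)

definition pair_colourable :: "nat set set \<Rightarrow> nat set \<Rightarrow> nat \<Rightarrow> nat \<Rightarrow> bool \<Rightarrow> bool" where
  "pair_colourable I T u w same \<longleftrightarrow>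
     (\<exists>col. proper_colouring I (T \<union> {u, w}) col \<and> (col u = col w \<longleftrightarrow> same))"

lemma pair_colourable_commute: "pair_colourable I T u w s \<longleftrightarrow> pair_colourable I T w u s"
  unfolding pair_colourable_def by (metis insert_commute)

lemma pair_colourable_if_three_colourable:
  "three_colourable I (T \<union> {u, w}) \<Longrightarrow> \<exists>s. pair_colourable I T u w s"
  unfolding three_colourable_def pair_colourable_def by blast

lemma three_colourable_glue:
  assumes "pair_colourable I A u w s" "pair_colourable I B u w s"
    and "A \<inter> B = {}" "\<forall>x\<in>A. \<forall>y\<in>B. {x, y} \<notin> I"
  shows "three_colourable I (A \<union> B \<union> {u, w})"
proof -
  obtain ca cb where ca: "proper_colouring I (A \<union> {u, w}) ca" "(ca u = ca w) = s"
    and cb: "proper_colouring I (B \<union> {u, w}) cb" "(cb u = cb w) = s"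
    using assms(1,2) unfolding pair_colourable_def by blast
  obtain ca' where ca': "proper_colouring I (A \<union> {u, w}) ca'" "ca' u = 0" "ca' w = (if s then 0 else 1)"
    using proper_colouring_normalise[OF ca(1), of u w] ca(2) by auto
  obtain cb' where cb': "proper_colouring I (B \<union> {u, w}) cb'" "cb' u = 0" "cb' w = (if s then 0 else 1)"
    using proper_colouring_normalise[OF cb(1), of u w] cb(2) by auto
  have "proper_colouring I (A \<union> B \<union> {u, w}) (\<lambda>x. if x \<in> B then cb' x else ca' x)"
    using ca'(2,3) cb'(2,3) by (intro proper_colouring_glue[OF ca'(1) cb'(1) _ assms(3,4)]) auto
  then show ?thesis unfolding three_colourable_def by blast
qed

lemma pair_colourable_distinct:
  assumes "three_colourable I (T \<union> {w})" "u \<noteq> w" "{u, w} \<notin> I"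
    and fin: "finite (neighbours I T u)" and deg: "card (neighbours I T u) \<le> 1"
  shows "pair_colourable I T u w False"
proof -
  obtain col where col: "proper_colouring I (T \<union> {w}) col"
    using assms(1) unfolding three_colourable_def by blast
  let ?A = "insert (col w) (col ` neighbours I T u)"
  have sub: "col ` neighbours I (T \<union> {w}) u \<subseteq> ?A"
    using assms(3) unfolding neighbours_def by auto
  have "card (col ` neighbours I T u) \<le> 1"
    using card_image_le[OF fin, of col] deg by linarith
  then have card: "card ?A \<le> 2"
    using fin by (simp add: card_insert_if)
  obtain c where c: "c \<notin> ?A" and col': "proper_colouring I (insert u (T \<union> {w})) (col(u := c))"
    by (rule proper_colouring_extend[OF col _ card sub]) (use fin in simp)
  have "insert u (T \<union> {w}) = T \<union> {u, w}" by blast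
  moreover have "(col(u := c)) u \<noteq> (col(u := c)) w" using c assms(2) by simp
  ultimately show ?thesis using col' unfolding pair_colourable_def by auto
qed

lemma pair_colourable_same:
  assumes "three_colourable I T" "{u, w} \<notin> I"
    and fin: "finite (neighbours I T u)" "finite (neighbours I T w)"
    and deg: "card (neighbours I T u) \<le> 1" "card (neighbours I T w) \<le> 1"
  shows "pair_colourable I T u w True"
proof -
  obtain col where col: "proper_colouring I T col"
    using assms(1) unfolding three_colourable_def by blast
  let ?A = "col ` neighbours I T u \<union> col ` neighbours I T w"
  have "finite ?A" using fin by simp
  moreover have "card ?A \<le> 2"
    using card_Un_le[of "col ` neighbours I T u" "col ` neighbours I T w"]
      card_image_le[OF fin(1), of col] card_image_le[OF fin(2), of col] deg by linarith
  ultimately obtain c where c: "c < 3" "c \<notin> ?A"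
    by (rule free_colour)
  then have col_u: "proper_colouring I (insert u T) (col(u := c))"
    by (intro proper_colouring_insert[OF col]) auto
  have "neighbours I (insert u T) w = neighbours I T w"
    using assms(2) unfolding neighbours_def by (auto simp: insert_commute)
  moreover have "u \<notin> neighbours I T w"
    using assms(2) unfolding neighbours_def by (auto simp: insert_commute)
  ultimately have "c \<notin> (col(u := c)) ` neighbours I (insert u T) w"
    using c(2) by auto
  then have "proper_colouring I (insert w (insert u T)) (col(u := c, w := c))"
    by (rule proper_colouring_insert[OF col_u c(1)])
  moreover have "insert w (insert u T) = T \<union> {u, w}" by blast
  ultimately show ?thesis
    unfolding pair_colourable_def by (intro exI[of _ "col(u := c, w := c)"]) simp
qed

lemma pair_colourable_low_degree:
  assumes "three_colourable I (T \<union> {u, w})" "finite T" "u \<noteq> w" "{u, w} \<notin> I"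
  shows "card (neighbours I T u) \<le> 1 \<or> card (neighbours I T w) \<le> 1 \<Longrightarrow> pair_colourable I T u w False"
    and "card (neighbours I T u) \<le> 1 \<Longrightarrow> card (neighbours I T w) \<le> 1 \<Longrightarrow> pair_colourable I T u w True"
proof -
  have fin: "finite (neighbours I T x)" for x
    using finite_subset[OF neighbours_subset assms(2)] .
  have "three_colourable I (T \<union> {w})" "three_colourable I (T \<union> {u})"
    by (rule three_colourable_subset[OF assms(1)], blast)+
  moreover have "w \<noteq> u" "{w, u} \<notin> I" using assms(3,4) by (simp_all add: insert_commute)
  ultimately show "pair_colourable I T u w False"
    if "card (neighbours I T u) \<le> 1 \<or> card (neighbours I T w) \<le> 1"
    using that pair_colourable_distinct[of I T w u] pair_colourable_distinct[of I T u w]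
      assms(3,4) fin pair_colourable_commute by blast
  show "pair_colourable I T u w True"
    if "card (neighbours I T u) \<le> 1" "card (neighbours I T w) \<le> 1"
    using pair_colourable_same[OF three_colourable_subset[OF assms(1)] assms(4) fin fin that]
    by blast
qed

lemma card_neighbours_split:
  assumes "finite A" "finite B" "A \<inter> B = {}" "neighbours I W p \<subseteq> A \<union> B" "A \<union> B \<subseteq> W"
    and "card (neighbours I W p) \<le> 3"
  shows "card (neighbours I A p) \<le> 1 \<or> card (neighbours I B p) \<le> 1"
proof -
  have "neighbours I W p = neighbours I A p \<union> neighbours I B p"
    using assms(4,5) unfolding neighbours_def by blast
  moreover have "neighbours I A p \<inter> neighbours I B p = {}"
    using assms(3) unfolding neighbours_def by blast
  moreover have "finite (neighbours I A p)" "finite (neighbours I B p)"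
    using finite_subset[OF neighbours_subset] assms(1,2) by blast+
  ultimately have "card (neighbours I A p) + card (neighbours I B p) \<le> 3"
    using assms(6) by (simp add: card_Un_disjoint)
  then show ?thesis by linarith
qed

lemma pair_colourable_common:
  assumes col_A: "three_colourable I (A \<union> {u, w})" and col_B: "three_colourable I (B \<union> {u, w})"
    and "finite A" "finite B" "u \<noteq> w" "{u, w} \<notin> I"
    and "card (neighbours I A u) \<le> 1 \<or> card (neighbours I B u) \<le> 1"
    and "card (neighbours I A w) \<le> 1 \<or> card (neighbours I B w) \<le> 1"
  obtains s where "pair_colourable I A u w s" "pair_colourable I B u w s"
proof -
  note A = pair_colourable_low_degree[OF col_A assms(3,5,6)]
  note B = pair_colourable_low_degree[OF col_B assms(4,5,6)]
  \<comment> \<open>a side meeting both u and w at most once accepts either relation between their colours\<close>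
  consider "card (neighbours I A u) \<le> 1" "card (neighbours I A w) \<le> 1"
    | "card (neighbours I B u) \<le> 1" "card (neighbours I B w) \<le> 1"
    | "card (neighbours I A u) \<le> 1 \<or> card (neighbours I A w) \<le> 1"
      "card (neighbours I B u) \<le> 1 \<or> card (neighbours I B w) \<le> 1"
    using assms(7,8) by blast
  then show ?thesis
  proof cases
    case 1
    obtain s where "pair_colourable I B u w s"
      using pair_colourable_if_three_colourable[OF col_B] by blast
    moreover from 1 have "pair_colourable I A u w s"
      using A by (cases s) simp_all
    ultimately show ?thesis by (rule that[rotated])
  next
    case 2
    obtain s where "pair_colourable I A u w s"
      using pair_colourable_if_three_colourable[OF col_A] by blast
    moreover from 2 have "pair_colourable I B u w s"
      using B by (cases s) simp_all
    ultimately show ?thesis by (rule that)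
  next
    case 3
    then show ?thesis using A(1) B(1) by (intro that[of False]) simp_all
  qed
qed

lemma three_colourable_two_sided:
  assumes fin: "finite W" and proper_subsets: "\<forall>W'. W' \<subset> W \<longrightarrow> three_colourable I W'"
    and parts: "A \<union> B = W - {u, w}" "A \<inter> B = {}" "A \<noteq> {}" "B \<noteq> {}"
    and uw: "u \<in> W" "w \<in> W" "u \<noteq> w" "{u, w} \<notin> I"
    and no_edge: "\<forall>x\<in>A. \<forall>y\<in>B. {x, y} \<notin> I"
    and deg: "card (neighbours I W u) \<le> 3" "card (neighbours I W w) \<le> 3"
  shows "three_colourable I W"
proof -
  have AB: "A \<union> B \<subseteq> W" using parts(1) by blast
  then have finAB: "finite A" "finite B" using finite_subset[OF _ fin] by blast+
  have "A \<union> {u, w} \<subset> W" "B \<union> {u, w} \<subset> W" using parts uw(1,2) by blast+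
  then have col_A: "three_colourable I (A \<union> {u, w})" and col_B: "three_colourable I (B \<union> {u, w})"
    using proper_subsets by blast+
  have "neighbours I W p \<subseteq> A \<union> B" if "p = u \<or> p = w" for p
  proof
    fix y assume y: "y \<in> neighbours I W p"
    then have "{p, y} \<noteq> {u, w}" "y \<noteq> p" using uw(4) unfolding neighbours_def by auto
    with that have "y \<noteq> u" "y \<noteq> w" by (auto simp: doubleton_eq_iff)
    with y parts(1) show "y \<in> A \<union> B" unfolding neighbours_def by blast
  qed
  then have "card (neighbours I A p) \<le> 1 \<or> card (neighbours I B p) \<le> 1"
    if "p = u \<or> p = w" for p
    using card_neighbours_split[OF finAB parts(2) _ AB] that deg by blast
  then obtain s where "pair_colourable I A u w s" "pair_colourable I B u w s"
    using pair_colourable_common[OF col_A col_B finAB uw(3,4)] by blast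
  moreover have "A \<union> B \<union> {u, w} = W" using parts(1) uw(1,2) by blast
  ultimately show ?thesis using three_colourable_glue[OF _ _ parts(2) no_edge] by metis
qed

definition descends_to :: "nat set set \<Rightarrow> nat set \<Rightarrow> nat \<Rightarrow> (nat \<Rightarrow> nat) \<Rightarrow> bool" where
  "descends_to I U r d \<longleftrightarrow> (\<forall>x\<in>U. x \<noteq> r \<longrightarrow> (\<exists>y\<in>U. y \<noteq> x \<and> {x, y} \<in> I \<and> d y < d x))"

lemma descends_to_remove_farthest:
  assumes "finite U" "r \<in> U" "U \<noteq> {r}" "descends_to I U r d"
  obtains x y where "x \<in> U" "x \<noteq> r" "y \<in> U" "y \<noteq> x" "{x, y} \<in> I"
    "descends_to I (U - {x}) r d"
proof -
  have fin_d: "finite (d ` (U - {r}))" and ne: "d ` (U - {r}) \<noteq> {}"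
    using assms(1-3) by auto
  obtain x where x: "Max (d ` (U - {r})) = d x" "x \<in> U - {r}"
    using Max_in[OF fin_d ne] by (rule imageE)
  have farthest: "d z \<le> d x" if "z \<in> U - {r}" for z
    using Max_ge[OF fin_d imageI[OF that]] x(1) by simp
  obtain y where y: "y \<in> U" "y \<noteq> x" "{x, y} \<in> I"
    using assms(4) x(2) unfolding descends_to_def by blast
  have "descends_to I (U - {x}) r d"
    unfolding descends_to_def
  proof (intro ballI impI)
    fix z assume z: "z \<in> U - {x}" "z \<noteq> r"
    then obtain y' where y': "y' \<in> U" "y' \<noteq> z" "{z, y'} \<in> I" "d y' < d z"
      using assms(4) unfolding descends_to_def by blast
    moreover have "d z \<le> d x" using farthest z by blast
    with y'(4) have "y' \<noteq> x" by auto
    with y' show "\<exists>y\<in>U - {x}. y \<noteq> z \<and> {z, y} \<in> I \<and> d y < d z" by blast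
  qed
  with x(2) y show ?thesis using that by blast
qed

lemma proper_colouring_insert_twins:
  assumes col: "proper_colouring I T col" and fin: "finite (neighbours I T x)"
    and deg: "card (neighbours I T x) \<le> 3"
    and twins: "u \<in> neighbours I T x" "w \<in> neighbours I T x" "u \<noteq> w" "col u = col w"
  obtains c where "proper_colouring I (insert x T) (col(x := c))"
proof -
  have "col ` neighbours I T x \<subseteq> col ` (neighbours I T x - {u})"
  proof
    fix c assume "c \<in> col ` neighbours I T x"
    then obtain z where "z \<in> neighbours I T x" "c = col z" by blast
    then show "c \<in> col ` (neighbours I T x - {u})"
      using twins by (cases "z = u") auto
  qed
  then have "card (col ` neighbours I T x) \<le> card (col ` (neighbours I T x - {u}))"
    using fin by (intro card_mono) simp_all
  also have "\<dots> \<le> card (neighbours I T x - {u})"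
    using fin by (intro card_image_le) simp
  also have "\<dots> \<le> 2"
    using fin deg twins(1) by (simp add: card_Diff_singleton)
  finally show ?thesis
    using proper_colouring_insert_low_degree[OF col finite_imageI[OF fin]] that by blast
qed

lemma proper_colouring_insert_before_neighbour:
  assumes col: "proper_colouring I P col" and "finite T" "P \<subseteq> T"
    and deg: "card (neighbours I T x) \<le> 3" and y: "y \<in> neighbours I T x" "y \<notin> P"
  obtains c where "proper_colouring I (insert x P) (col(x := c))"
proof -
  have fin_T: "finite (neighbours I T x)" and fin_P: "finite (neighbours I P x)"
    using finite_subset[OF neighbours_subset] \<open>finite T\<close> \<open>P \<subseteq> T\<close> finite_subset by blast+
  have "neighbours I P x \<subseteq> neighbours I T x - {y}"
    using y \<open>P \<subseteq> T\<close> unfolding neighbours_def by blast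
  then have "card (neighbours I P x) \<le> card (neighbours I T x - {y})"
    by (rule card_mono[OF finite_Diff[OF fin_T]])
  also have "\<dots> \<le> 2" using fin_T deg y(1) by (simp add: card_Diff_singleton)
  finally have "card (col ` neighbours I P x) \<le> 2"
    using card_image_le[OF fin_P, of col] by linarith
  then show ?thesis
    using proper_colouring_insert_low_degree[OF col finite_imageI[OF fin_P]] that by blast
qed

text \<open>Greedy colouring of U in order of decreasing d: every vertex but r still has an
  uncoloured neighbour when its turn comes, and r finally sees u and w in a single colour.\<close>

lemma proper_colouring_extend_greedy:
  assumes "finite U" "finite P" "U \<inter> P = {}" "proper_colouring I P col" "r \<in> U"
    and "descends_to I U r d" and "\<forall>x\<in>U. card (neighbours I (U \<union> P) x) \<le> 3"
    and "u \<in> P" "w \<in> P" "u \<noteq> w" "{r, u} \<in> I" "{r, w} \<in> I" "col u = col w"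
  shows "\<exists>col'. proper_colouring I (U \<union> P) col' \<and> (\<forall>x\<in>P. col' x = col x)"
  using assms
proof (induction "card U" arbitrary: U P col rule: less_induct)
  case less
  note fin = less.prems(1,2) and disj = less.prems(3) and col = less.prems(4) and r = less.prems(5)
    and descent = less.prems(6) and deg = less.prems(7) and twins = less.prems(8-13)
  have "r \<notin> P" using disj r by blast
  show ?case
  proof (cases "U = {r}")
    case True
    then have nb: "neighbours I (U \<union> P) r = neighbours I P r"
      unfolding neighbours_def by auto
    obtain c where "proper_colouring I (insert r P) (col(r := c))"
    proof (rule proper_colouring_insert_twins[OF col _ _ _ _ twins(3,6)])
      show "finite (neighbours I P r)" using finite_subset[OF neighbours_subset fin(2)] .
      show "card (neighbours I P r) \<le> 3" using bspec[OF deg r] nb by simp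
      show "u \<in> neighbours I P r" "w \<in> neighbours I P r"
        using twins \<open>r \<notin> P\<close> unfolding neighbours_def by auto
    qed
    moreover have "insert r P = U \<union> P" using True by blast
    ultimately show ?thesis using \<open>r \<notin> P\<close> by auto
  next
    case False
    obtain x y where x: "x \<in> U" "x \<noteq> r" and y: "y \<in> U" "y \<noteq> x" "{x, y} \<in> I"
      and descent': "descends_to I (U - {x}) r d"
      by (rule descends_to_remove_farthest[OF fin(1) r False descent])
    have xP: "x \<notin> P" using disj x(1) by blast
    obtain c where col_x: "proper_colouring I (insert x P) (col(x := c))"
    proof (rule proper_colouring_insert_before_neighbour[where T = "U \<union> P" and y = y, OF col])
      show "finite (U \<union> P)" "P \<subseteq> U \<union> P" using fin by simp_all
      show "card (neighbours I (U \<union> P) x) \<le> 3" using deg x(1) by simp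
      show "y \<in> neighbours I (U \<union> P) x" "y \<notin> P" using y disj unfolding neighbours_def by auto
    qed
    have UP: "U - {x} \<union> insert x P = U \<union> P" using x(1) by blast
    have "\<exists>col'. proper_colouring I (U - {x} \<union> insert x P) col' \<and>
        (\<forall>z\<in>insert x P. col' z = (col(x := c)) z)"
    proof (rule less.hyps)
      show "card (U - {x}) < card U" using fin(1) x(1) by (intro card_Diff1_less)
      show "finite (U - {x})" "finite (insert x P)" using fin by simp_all
      show "(U - {x}) \<inter> insert x P = {}" using disj by blast
      show "r \<in> U - {x}" using r x(2) by blast
      show "descends_to I (U - {x}) r d" by (rule descent')
      show "\<forall>z\<in>U - {x}. card (neighbours I (U - {x} \<union> insert x P) z) \<le> 3"
        using deg UP by simp
      show "u \<in> insert x P" "w \<in> insert x P" "(col(x := c)) u = (col(x := c)) w"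
        using twins xP by auto
      show "proper_colouring I (insert x P) (col(x := c))" by (rule col_x)
      show "u \<noteq> w" "{r, u} \<in> I" "{r, w} \<in> I" using twins by simp_all
    qed
    then show ?thesis using UP xP by auto
  qed
qed

definition component :: "nat set set \<Rightarrow> nat set \<Rightarrow> nat \<Rightarrow> nat set" where
  "component I S v = {x. (x, v) \<in> {(x, y). x \<in> S \<and> y \<in> S \<and> {x, y} \<in> I}\<^sup>*}"

lemma component_subset:
  assumes "v \<in> S"
  shows "component I S v \<subseteq> S"
proof
  fix x assume "x \<in> component I S v"
  then have "(x, v) \<in> {(x, y). x \<in> S \<and> y \<in> S \<and> {x, y} \<in> I}\<^sup>*"
    unfolding component_def by simp
  then show "x \<in> S" using assms by (cases rule: converse_rtranclE) simp_all
qed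

lemma mem_component_self: "v \<in> component I S v"
  unfolding component_def by simp

lemma component_closed:
  assumes "x \<in> S" "y \<in> component I S v" "v \<in> S" "{x, y} \<in> I"
  shows "x \<in> component I S v"
proof -
  have "y \<in> S" using component_subset[OF assms(3)] assms(2) by blast
  with assms(1,4) have "(x, y) \<in> {(x, y). x \<in> S \<and> y \<in> S \<and> {x, y} \<in> I}" by simp
  then show ?thesis
    using assms(2) unfolding component_def by (blast intro: converse_rtrancl_into_rtrancl)
qed

lemma component_no_edge:
  assumes "v \<in> S" "x \<in> component I S v" "y \<in> S - component I S v"
  shows "{x, y} \<notin> I"
proof
  assume "{x, y} \<in> I"
  then have "{y, x} \<in> I" by (simp add: insert_commute)
  with assms show False using component_closed[of y S x I v] by blast
qed

lemma component_descends_to: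
  obtains d where "descends_to I (component I S v) v d"
proof
  define E where "E = {(x, y). x \<in> S \<and> y \<in> S \<and> {x, y} \<in> I}"
  define d where "d x = (LEAST k. (x, v) \<in> E ^^ k)" for x
  show "descends_to I (component I S v) v d"
    unfolding descends_to_def
  proof (intro ballI impI)
    fix x assume x: "x \<in> component I S v" "x \<noteq> v"
    then have "(x, v) \<in> E\<^sup>*" unfolding component_def E_def by simp
    then obtain k where "(x, v) \<in> E ^^ k" using rtrancl_power by blast
    then have dx: "(x, v) \<in> E ^^ d x" unfolding d_def by (rule LeastI)
    with x(2) obtain m where m: "d x = Suc m" by (cases "d x") auto
    with dx obtain y where y: "(x, y) \<in> E" "(y, v) \<in> E ^^ m" by (metis relpow_Suc_D2)
    have "d y \<le> m" unfolding d_def using y(2) by (rule Least_le)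
    moreover have "y \<in> component I S v"
      using y(2) relpow_imp_rtrancl unfolding component_def E_def by blast
    moreover from calculation m have "y \<noteq> x" by auto
    ultimately show "\<exists>y\<in>component I S v. y \<noteq> x \<and> {x, y} \<in> I \<and> d y < d x"
      using y(1) m unfolding E_def by auto
  qed
qed

lemma three_colourable_connected:
  assumes fin: "finite W" and deg: "\<forall>x\<in>W. card (neighbours I W x) \<le> 3"
    and vS: "v \<in> W - {u, w}" and uw: "u \<in> W" "w \<in> W" "u \<noteq> w" "{u, w} \<notin> I"
    and edges: "{v, u} \<in> I" "{v, w} \<in> I"
    and connected: "component I (W - {u, w}) v = W - {u, w}"
  shows "three_colourable I W"
proof -
  obtain d where "descends_to I (component I (W - {u, w}) v) v d"
    by (rule component_descends_to)
  with connected have d: "descends_to I (W - {u, w}) v d" by simp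
  have col: "proper_colouring I {u, w} (\<lambda>_. 0)"
    using uw(4) unfolding proper_colouring_def by (auto simp: insert_commute)
  have W_eq: "W - {u, w} \<union> {u, w} = W" using uw(1,2) by blast
  \<comment> \<open>u and w get the same colour, so v, coloured last, sees at most two colours\<close>
  have "\<exists>col'. proper_colouring I (W - {u, w} \<union> {u, w}) col' \<and> (\<forall>x\<in>{u, w}. col' x = 0)"
  proof (rule proper_colouring_extend_greedy[OF _ _ _ col vS d _ _ _ uw(3) edges refl])
    show "finite (W - {u, w})" "finite {u, w}" "(W - {u, w}) \<inter> {u, w} = {}" "u \<in> {u, w}" "w \<in> {u, w}"
      using fin by auto
    show "\<forall>x\<in>W - {u, w}. card (neighbours I (W - {u, w} \<union> {u, w}) x) \<le> 3"
      using deg unfolding W_eq by simp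
  qed
  then show ?thesis unfolding three_colourable_def W_eq by blast
qed

lemma three_colourable_disconnected:
  assumes "finite W" "\<forall>W'. W' \<subset> W \<longrightarrow> three_colourable I W'"
    and "v \<in> W - {u, w}" "u \<in> W" "w \<in> W" "u \<noteq> w" "{u, w} \<notin> I"
    and "component I (W - {u, w}) v \<noteq> W - {u, w}"
    and "card (neighbours I W u) \<le> 3" "card (neighbours I W w) \<le> 3"
  shows "three_colourable I W"
proof -
  let ?S = "W - {u, w}"
  have sub: "component I ?S v \<subseteq> ?S" by (rule component_subset[OF assms(3)])
  show ?thesis
  proof (rule three_colourable_two_sided[OF assms(1,2) _ _ _ _ assms(4-7) _ assms(9,10)])
    show "component I ?S v \<union> (?S - component I ?S v) = ?S" using sub by blast
    show "component I ?S v \<inter> (?S - component I ?S v) = {}" by blast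
    show "component I ?S v \<noteq> {}" using mem_component_self by blast
    show "?S - component I ?S v \<noteq> {}" using sub assms(8) by blast
    show "\<forall>x\<in>component I ?S v. \<forall>y\<in>?S - component I ?S v. {x, y} \<notin> I"
      using component_no_edge[OF assms(3)] by blast
  qed
qed

lemma nonadjacent_neighbours:
  assumes "v \<in> W" "W \<subseteq> {0..<n}" "card (neighbours I W v) = 3"
    and noK4: "\<not> (\<exists>Q. Q \<subseteq> {0..<n} \<and> card Q = 4 \<and> (\<forall>j\<in>Q. \<forall>k\<in>Q. j \<noteq> k \<longrightarrow> {j, k} \<in> I))"
  obtains u w where "u \<in> neighbours I W v" "w \<in> neighbours I W v" "u \<noteq> w" "{u, w} \<notin> I"
proof -
  obtain a b c where abc: "neighbours I W v = {a, b, c}" "a \<noteq> b" "b \<noteq> c" "a \<noteq> c"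
    using assms(3) card_3_iff by metis
  have nb: "x \<in> W" "x \<noteq> v" "{v, x} \<in> I" if "x \<in> {a, b, c}" for x
    using that abc(1) unfolding neighbours_def by blast+
  have "\<not> ({a, b} \<in> I \<and> {a, c} \<in> I \<and> {b, c} \<in> I)"
  proof
    assume triangle: "{a, b} \<in> I \<and> {a, c} \<in> I \<and> {b, c} \<in> I"
    have "insert v {a, b, c} \<subseteq> {0..<n}" using nb assms(1,2) by blast
    moreover have "v \<notin> {a, b, c}" using nb(2) by blast
    then have "card (insert v {a, b, c}) = 4" using abc(2-4) by simp
    moreover have "\<forall>j\<in>insert v {a, b, c}. \<forall>k\<in>insert v {a, b, c}. j \<noteq> k \<longrightarrow> {j, k} \<in> I"
      using nb triangle by (auto simp: insert_commute)
    ultimately show False using noK4 by blast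
  qed
  then show ?thesis using that[of a b] that[of a c] that[of b c] abc by auto
qed

lemma three_colourable_subcubic_K4_free:
  assumes fI: "finite I" and deg: "\<forall>f<n. ideg I f \<le> 3"
    and noK4: "\<not> (\<exists>Q. Q \<subseteq> {0..<n} \<and> card Q = 4 \<and> (\<forall>j\<in>Q. \<forall>k\<in>Q. j \<noteq> k \<longrightarrow> {j, k} \<in> I))"
  shows "three_colourable I {0..<n}"
proof (rule ccontr)
  assume "\<not> three_colourable I {0..<n}"
  then obtain W where W: "W \<subseteq> {0..<n}" "critical I W"
    using critical_subset_exists by blast
  have fin: "finite W" by (rule finite_subset[OF W(1)]) simp
  have cubic: "card (neighbours I W x) = 3" if "x \<in> W" for x
  proof -
    have "ideg I x \<le> 3" using deg that W(1) by auto
    then show ?thesis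
      using critical_degree[OF fin W(2) that] card_neighbours_le_ideg[OF fI, of W x] by linarith
  qed
  obtain v where v: "v \<in> W" using critical_nonempty[OF W(2)] by blast
  obtain u w where uw: "u \<in> neighbours I W v" "w \<in> neighbours I W v" "u \<noteq> w" "{u, w} \<notin> I"
    by (rule nonadjacent_neighbours[OF v W(1) cubic[OF v] noK4])
  then have u: "u \<in> W" "{v, u} \<in> I" and w: "w \<in> W" "{v, w} \<in> I" and vS: "v \<in> W - {u, w}"
    using v unfolding neighbours_def by auto
  have proper_subsets: "\<forall>W'. W' \<subset> W \<longrightarrow> three_colourable I W'"
    using W(2) unfolding critical_def by blast
  have "three_colourable I W"
  proof (cases "component I (W - {u, w}) v = W - {u, w}")
    case True
    show ?thesis
      by (rule three_colourable_connected[OF fin _ vS u(1) w(1) uw(3,4) u(2) w(2) True])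
        (use cubic in simp)
  next
    case False
    show ?thesis
      using cubic[OF u(1)] cubic[OF w(1)]
      by (intro three_colourable_disconnected[OF fin proper_subsets vS u(1) w(1) uw(3,4) False]) simp_all
  qed
  with W(2) show False unfolding critical_def by blast
qed

theorem theorem5:
  fixes n :: nat and I :: "nat set set"
  assumes "n \<ge> 2"
    and "\<forall>e\<in>I. \<exists>j k. j < n \<and> k < n \<and> j \<noteq> k \<and> e = {j, k}"
    and "((\<forall>f<n. ideg I f \<le> 3) \<and>
           \<not> (\<exists>Q. Q \<subseteq> {0..<n} \<and> card Q = 4 \<and>
                (\<forall>j\<in>Q. \<forall>k\<in>Q. j \<noteq> k \<longrightarrow> {j, k} \<in> I)))
       \<or> card {f. f < n \<and> ideg I f > 2} \<le> 3
       \<or> ((\<nexists>G. icycle n I G) \<or> (\<exists>f<n. \<forall>G. icycle n I G \<longrightarrow> f \<in> set G))"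
  shows "\<exists>r1 r2. rank2 n r1 r2 \<and>
           (\<forall>j<n. estimable n r1 r2 {j}) \<and>
           (\<forall>e\<in>I. estimable n r1 r2 e)"
proof -
  have "I \<subseteq> Pow {0..<n}" using assms(2) by auto
  then have fin: "finite I" by (rule finite_subset) simp
  from assms(3) have "three_colourable I {0..<n}"
  proof (elim disjE conjE)
    assume "\<forall>f<n. ideg I f \<le> 3"
      and "\<not> (\<exists>Q. Q \<subseteq> {0..<n} \<and> card Q = 4 \<and> (\<forall>j\<in>Q. \<forall>k\<in>Q. j \<noteq> k \<longrightarrow> {j, k} \<in> I))"
    then show ?thesis by (rule three_colourable_subcubic_K4_free[OF fin])
  next
    assume "card {f. f < n \<and> 2 < ideg I f} \<le> 3"
    then show ?thesis by (rule three_colourable_few_high_degree[OF fin])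
  qed (use three_colourable_if_cycles_share_vertex in blast)+
  then show ?thesis by (rule design_of_colouring[OF assms(1,2)])
qed

end
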